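(* For each $1\le i\le m-1$, $$\lambda_{1,\rm rig}^{-1}\big(\phi_{i,\rm rig}^{-1}(\mathfrak Y_{\rm rig}[0,1))\big)=\lambda_{2,\rm rig}^{-1}\big(\phi_{i+1,\rm rig}^{-1}(\mathfrak Y_{\rm rig}[0,1))\big).$$
   Context: $p$ prime; $L_0/\mathbb Q_p$ finite, ring of integers $\mathcal O_0$, residue field $\kappa$. $X,Y$ curves over $\mathcal O_0$ (reduced, flat separated finite type, connected one-dimensional geometric fibres), $\pi:Y\to X$ finite flat, $Y\otimes\kappa$ reduced with two irreducible components (one of them the image of a section $s$ of $\pi\otimes\kappa$), meeting at $\kappa$-rational ordinary double points; $w$ (resp. $\delta$) an $\mathcal O_0$-automorphism of $Y$ whose reduction interchanges (resp. preserves) the components. $\mathfrak Y_{\rm rig}$ is the Raynaud generic fibre of the formal completion of $Y$ along its special fibre. The measure of singularity $\nu_{\mathfrak Y}$ of Goren–Kassaei is a function on points of $\mathfrak Y_{\rm rig}$ with values in $\mathbb Q\cap[0,1]$ ($0$/$1$ on points specializing to nonsingular points of $s(X\otimes\kappa)$/the other component, a normalized annulus-parameter valuation on residue annuli of singular points); known: $\nu_{\mathfrak Y}(\delta_{\rm rig}Q)=\nu_{\mathfrak Y}(Q)$. $\mathfrak Y_{\rm rig}I=\{\nu_{\mathfrak Y}\in I\}$. $\mathfrak Y^0_{\rm rig}$ is a rigid curve over $L_0$ with morphisms $\pi_{1,\rm rig},\pi'_{1,\rm rig}:\mathfrak Y^0_{\rm rig}\to\mathfrak Y_{\rm rig}$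 and $\pi_{2,\rm rig}:=w_{\rm rig}\pi'_{1,\rm rig}$. $m\ge1$; $X(m)$ a curve over $\mathcal O_0$ with $\mathfrak X(m)_{\rm rig}$ the generic fibre of its formal completion; $\mathfrak X^0(m)_{\rm rig}$ a rigid curve over $L_0$ with finite flat $\lambda_{1,\rm rig},\lambda_{2,\rm rig}:\mathfrak X^0(m)_{\rm rig}\to\mathfrak X(m)_{\rm rig}$; for $1\le i\le m$ morphisms $\phi_i:X(m)\to Y$ and $\eta_{i,\rm rig}:\mathfrak X^0(m)_{\rm rig}\to\mathfrak Y^0_{\rm rig}$ with $\phi_{i,\rm rig}\lambda_{j,\rm rig}=\pi_{j,\rm rig}\eta_{i,\rm rig}$ for $j=1,2$, and $\phi_{i,\rm rig}\lambda_{1,\rm rig}=\delta_{\rm rig}\pi_{2,\rm rig}\eta_{i+1,\rm rig}$ for $1\le i\le m-1$. *)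

theory Defs
  imports Complex_Main
begin

text \<open>Abstract model: rigid spaces are represented by their sets of points (types),
morphisms by the induced maps on points, and the measure of singularity by a
function on points of Y_rig with values in [0,1].\<close>

definition nu_region :: "('y \<Rightarrow> real) \<Rightarrow> real set \<Rightarrow> 'y set" where
  "nu_region nu I = {Q. nu Q \<in> I}"

end

theory Submission
  imports Defs
begin

text \<open>Both sides are the preimage under eta (i+1) of the same region: on X0(m)_rig the
maps phi_i lambda_1 and phi_(i+1) lambda_2 differ only by delta, which preserves nu.\<close>

lemma vimage_nu_region_invariant:
  assumes "\<And>Q. nu (f Q) = nu Q"
  shows "f -` nu_region nu I = nu_region nu I"
  using assms by (simp add: nu_region_def)

theorem lemma3p5:
  fixes nu :: "'y \<Rightarrow> real"
    and w delta :: "'y \<Rightarrow> 'y"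
    and pi1 pi1' :: "'y0 \<Rightarrow> 'y"
    and phi :: "nat \<Rightarrow> 'x \<Rightarrow> 'y"
    and lam1 lam2 :: "'x0 \<Rightarrow> 'x"
    and eta :: "nat \<Rightarrow> 'x0 \<Rightarrow> 'y0"
    and m i :: nat
  assumes nu_range: "\<And>Q. nu Q \<in> {0..1}"
    and nu_delta: "\<And>Q. nu (delta Q) = nu Q"
    and m_pos: "1 \<le> m"
    and comm1: "\<And>k. 1 \<le> k \<Longrightarrow> k \<le> m \<Longrightarrow> phi k \<circ> lam1 = pi1 \<circ> eta k"
    and comm2: "\<And>k. 1 \<le> k \<Longrightarrow> k \<le> m \<Longrightarrow> phi k \<circ> lam2 = (w \<circ> pi1') \<circ> eta k"
    and comm3: "\<And>k. 1 \<le> k \<Longrightarrow> k \<le> m - 1 \<Longrightarrow>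
                  phi k \<circ> lam1 = delta \<circ> (w \<circ> pi1') \<circ> eta (Suc k)"
    and i_ge: "1 \<le> i" and i_le: "i \<le> m - 1"
  shows "lam1 -` (phi i -` nu_region nu {0..<1})
       = lam2 -` (phi (Suc i) -` nu_region nu {0..<1})"
proof -
  let ?R = "nu_region nu {0..<1}"
  have "Suc i \<le> m"
    using i_le m_pos by simp
  then have lower: "phi (Suc i) \<circ> lam2 = w \<circ> pi1' \<circ> eta (Suc i)"
    using comm2 by simp
  have "lam1 -` (phi i -` ?R) = (phi i \<circ> lam1) -` ?R"
    by (simp add: vimage_comp)
  also have "\<dots> = (w \<circ> pi1' \<circ> eta (Suc i)) -` (delta -` ?R)"
    by (simp add: comm3[OF i_ge i_le] vimage_comp comp_assoc)
  also have "\<dots> = (phi (Suc i) \<circ> lam2) -` ?R"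
    by (simp add: vimage_nu_region_invariant nu_delta lower)
  also have "\<dots> = lam2 -` (phi (Suc i) -` ?R)"
    by (simp add: vimage_comp)
  finally show ?thesis .
qed

end
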